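(* Let $N\geq1$ be an integer, $t\in\mathbb R$ fixed, and $s\geq0$. Define $$\mathbf B_2^Q(u,v):=\begin{pmatrix}B_2(\mathcal Pu,\mathcal Qv)+B_2(\mathcal Qu,v)\\ B_2(\mathcal Pu,\mathcal Qv)+B_2(\mathcal Qu,v)\end{pmatrix}-\begin{pmatrix}B_2(\mathcal Pu,\mathcal Qu)+B_2(\mathcal Qu,u)\\ B_2(\mathcal Pv,\mathcal Qv)+B_2(\mathcal Qv,v)\end{pmatrix}.$$ Then $\mathbf B_2^Q$ maps $(\dot H^s)^2$ into $(\dot H^s)^2$ and there is a constant $C(s)$, independent of $N$ and $t$, such that for all $(u,v),(\tilde u,\tilde v)\in(\dot H^s)^2$, $$\|\mathbf B_2^Q(u,v)\|_{(\dot H^s)^2}\leq C(s)\frac1N\|(u,v)\|^2_{(\dot H^s)^2},$$ $$\|\mathbf B_2^Q(u,v)-\mathbf B_2^Q(\tilde u,\tilde v)\|_{(\dot H^s)^2}\leq C(s)\frac1N\|(u,v)-(\tilde u,\tilde v)\|_{(\dot H^s)^2}\big(\|(u,v)\|_{(\dot H^s)^2}+\|(\tilde u,\tilde v)\|_{(\dot H^s)^2}\big).$$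
   Context: $\mathbb Z_0=\mathbb Z\setminus\{0\}$. Mean-zero real-valued functions on $\mathbb T=[0,2\pi]$ are identified with their Fourier coefficients $(u_k)_{k\in\mathbb Z_0}$, $\overline{u_k}=u_{-k}$. For $s\in\mathbb R$, $\|u\|_{\dot H^s}^2=\sum_{k\in\mathbb Z_0}|k|^{2s}|u_k|^2$, $\dot H^s$ the space of such $u$ with finite norm, $\|(u,v)\|^2_{(\dot H^s)^2}=\|u\|^2_{\dot H^s}+\|v\|^2_{\dot H^s}$. $\mathcal P$ is the projection onto modes $|k|\leq N$: $(\mathcal Pu)_k=u_k$ if $|k|\leq N$, $0$ otherwise; $\mathcal Q=I-\mathcal P$ is the projection onto modes $|k|>N$. The bilinear operator $B_2$ is defined by $B_2(\phi,\psi)_k:=\frac16\sum_{k_1+k_2=k}\frac{e^{3ikk_1k_2t}}{k_1k_2}\phi_{k_1}\psi_{k_2}$, $k\in\mathbb Z_0$ (sum over $k_1,k_2\in\mathbb Z_0$). *)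

theory Defs
  imports "HOL-Analysis.Analysis"
begin

text \<open>Mean-zero real-valued functions on the torus, identified with their Fourier
coefficients u :: int \<Rightarrow> complex (the value at 0 is the zero mean).\<close>

definition hs_norm2 :: "real \<Rightarrow> (int \<Rightarrow> complex) \<Rightarrow> real" where
  "hs_norm2 s u = (\<Sum>\<^sub>\<infinity>k\<in>UNIV - {0}. (real_of_int \<bar>k\<bar>) powr (2 * s) * (cmod (u k))\<^sup>2)"

definition in_Hs :: "real \<Rightarrow> (int \<Rightarrow> complex) \<Rightarrow> bool" where
  "in_Hs s u \<longleftrightarrow> u 0 = 0 \<and> (\<forall>k. cnj (u k) = u (- k)) \<and>
     (\<lambda>k. (real_of_int \<bar>k\<bar>) powr (2 * s) * (cmod (u k))\<^sup>2) summable_on (UNIV - {0})"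

definition pair_norm :: "real \<Rightarrow> (int \<Rightarrow> complex) \<Rightarrow> (int \<Rightarrow> complex) \<Rightarrow> real" where
  "pair_norm s u v = sqrt (hs_norm2 s u + hs_norm2 s v)"

definition projP :: "nat \<Rightarrow> (int \<Rightarrow> complex) \<Rightarrow> (int \<Rightarrow> complex)" where
  "projP N u = (\<lambda>k. if \<bar>k\<bar> \<le> int N then u k else 0)"

definition projQ :: "nat \<Rightarrow> (int \<Rightarrow> complex) \<Rightarrow> (int \<Rightarrow> complex)" where
  "projQ N u = (\<lambda>k. if \<bar>k\<bar> > int N then u k else 0)"

text \<open>B_2(phi,psi)_k = 1/6 sum over k1+k2=k, k1,k2 nonzero; the mode k = 0 is not part of
Z_0 and is set to 0.\<close>
definition B2 :: "real \<Rightarrow> (int \<Rightarrow> complex) \<Rightarrow> (int \<Rightarrow> complex) \<Rightarrow> (int \<Rightarrow> complex)" where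
  "B2 t \<phi> \<psi> = (\<lambda>k. if k = 0 then 0 else
     (1/6) * (\<Sum>\<^sub>\<infinity>k1\<in>{k1. k1 \<noteq> 0 \<and> k1 \<noteq> k}.
        exp (\<i> * of_real (3 * real_of_int k * real_of_int k1 * real_of_int (k - k1) * t))
          / of_int (k1 * (k - k1)) * \<phi> k1 * \<psi> (k - k1)))"

definition BQ :: "nat \<Rightarrow> real \<Rightarrow> (int \<Rightarrow> complex) \<Rightarrow> (int \<Rightarrow> complex)
                   \<Rightarrow> (int \<Rightarrow> complex) \<times> (int \<Rightarrow> complex)" where
  "BQ N t u v =
    ((\<lambda>k. B2 t (projP N u) (projQ N v) k + B2 t (projQ N u) v k
          - (B2 t (projP N u) (projQ N u) k + B2 t (projQ N u) u k)),
     (\<lambda>k. B2 t (projP N u) (projQ N v) k + B2 t (projQ N u) v k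
          - (B2 t (projP N v) (projQ N v) k + B2 t (projQ N v) v k)))"

end

theory Submission
  imports Defs
begin

text \<open>Each component of \<open>BQ\<close> is a difference of values of the bilinear form
  \<open>B2Q u v = B2(Pu, Qv) + B2(Qu, v)\<close>, and in each of its terms one factor lives at frequencies
  above \<open>N\<close>. If \<open>g\<close> is supported on \<open>|m| > N\<close>, then in \<open>B2(f, g)\<^sub>k\<close> the weight splits as
  \<open>|k|\<^sup>s \<le> 2\<^sup>s |j|\<^sup>s |k - j|\<^sup>s\<close> while the symbol still carries \<open>1 / |k - j| < 1 / N\<close>. Hence
  \<open>|k|\<^sup>s |B2(f, g)\<^sub>k|\<close> is at most \<open>2\<^sup>s / (6 N)\<close> times the convolution of \<open>a\<^sub>j = |j|\<^sup>s |f\<^sub>j| / |j|\<close>,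
  which is summable by Cauchy-Schwarz against \<open>\<Sum> 1 / j\<^sup>2\<close>, with the square-summable
  \<open>b\<^sub>j = |j|\<^sup>s |g\<^sub>j|\<close>. Young's inequality for such convolutions gives
  \<open>\<parallel>B2(f, g)\<parallel> \<le> C N\<^sup>-\<^sup>1 \<parallel>f\<parallel> \<parallel>g\<parallel>\<close> in \<open>H\<^sup>s\<close>, uniformly in \<open>t\<close>; the Lipschitz estimate
  follows by bilinearity.\<close>

section \<open>Infinite sums: Cauchy-Schwarz and Young's inequality\<close>

lemma nonneg_summable_on_infsum_le:
  fixes f :: "'a \<Rightarrow> real"
  assumes "\<And>x. x \<in> A \<Longrightarrow> f x \<ge> 0"
    and "\<And>F. finite F \<Longrightarrow> F \<subseteq> A \<Longrightarrow> sum f F \<le> B"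
  shows "f summable_on A \<and> infsum f A \<le> B"
proof -
  have "f summable_on A"
    using assms by (intro nonneg_bdd_above_summable_on bdd_aboveI) auto
  with assms show ?thesis by (auto intro: infsum_le_finite_sums)
qed

lemma infsum_diff:
  fixes f g :: "'a \<Rightarrow> 'b::{topological_ab_group_add, t2_space}"
  assumes "f summable_on A" "g summable_on A"
  shows "infsum (\<lambda>x. f x - g x) A = infsum f A - infsum g A"
  using infsum_add[OF assms(1), of "\<lambda>x. - g x"] assms(2)
  by (simp add: summable_on_uminus infsum_uminus)

lemma infsum_sum_swap:
  fixes g :: "'i \<Rightarrow> 'a \<Rightarrow> real"
  assumes "finite I" "\<And>i. i \<in> I \<Longrightarrow> g i summable_on A"
  shows "infsum (\<lambda>x. \<Sum>i\<in>I. g i x) A = (\<Sum>i\<in>I. infsum (g i) A)"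
    and "(\<lambda>x. \<Sum>i\<in>I. g i x) summable_on A"
  using assms by (induction I rule: finite_induct) (auto simp: summable_on_add infsum_add)

lemma infsum_Cauchy_Schwarz:
  fixes a b :: "'a \<Rightarrow> real"
  assumes "\<And>x. x \<in> A \<Longrightarrow> a x \<ge> 0" "\<And>x. x \<in> A \<Longrightarrow> b x \<ge> 0"
    and "(\<lambda>x. (a x)\<^sup>2) summable_on A" "(\<lambda>x. (b x)\<^sup>2) summable_on A"
  shows "(\<lambda>x. a x * b x) summable_on A \<and>
    infsum (\<lambda>x. a x * b x) A \<le> sqrt (infsum (\<lambda>x. (a x)\<^sup>2) A * infsum (\<lambda>x. (b x)\<^sup>2) A)"
proof (rule nonneg_summable_on_infsum_le)
  fix F assume F: "finite F" "F \<subseteq> A"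
  have "(\<Sum>x\<in>F. a x * b x) \<le> sqrt ((\<Sum>x\<in>F. a x * b x)\<^sup>2)"
    by simp
  also have "\<dots> \<le> sqrt ((\<Sum>x\<in>F. (a x)\<^sup>2) * (\<Sum>x\<in>F. (b x)\<^sup>2))"
    by (rule real_sqrt_le_mono[OF Cauchy_Schwarz_ineq_sum])
  also have "\<dots> \<le> sqrt (infsum (\<lambda>x. (a x)\<^sup>2) A * infsum (\<lambda>x. (b x)\<^sup>2) A)"
    using F assms(3,4)
    by (intro real_sqrt_le_mono mult_mono finite_sum_le_infsum sum_nonneg infsum_nonneg) auto
  finally show "(\<Sum>x\<in>F. a x * b x) \<le> sqrt (infsum (\<lambda>x. (a x)\<^sup>2) A * infsum (\<lambda>x. (b x)\<^sup>2) A)" .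
qed (use assms in auto)

lemma summable_on_inverse_square_int: "(\<lambda>k::int. 1 / (real_of_int k)\<^sup>2) summable_on UNIV"
proof -
  have "summable (\<lambda>n::nat. inverse (real n ^ 2))"
    by (rule inverse_power_summable) auto
  then have nat: "(\<lambda>n::nat. 1 / (real n)\<^sup>2) summable_on UNIV"
    by (subst summable_on_UNIV_nonneg_real_iff) (auto simp: divide_inverse)
  have "(\<lambda>k::int. 1 / (real_of_int k)\<^sup>2) summable_on range int"
    using nat by (subst summable_on_reindex) (auto simp: o_def)
  moreover have "(\<lambda>k::int. 1 / (real_of_int k)\<^sup>2) summable_on range (\<lambda>n. - int n)"
    using nat by (subst summable_on_reindex) (auto simp: o_def inj_on_def)
  moreover have "range int \<union> range (\<lambda>n. - int n) = UNIV"
    by (auto intro: int_cases2)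
  ultimately show ?thesis by (metis summable_on_union)
qed

definition int_conv :: "(int \<Rightarrow> real) \<Rightarrow> (int \<Rightarrow> real) \<Rightarrow> int \<Rightarrow> real" where
  "int_conv a b k = infsum (\<lambda>j. a j * b (k - j)) UNIV"

lemma int_conv_nonneg: "(\<And>j. a j \<ge> 0) \<Longrightarrow> (\<And>j. b j \<ge> 0) \<Longrightarrow> int_conv a b k \<ge> 0"
  unfolding int_conv_def by (intro infsum_nonneg mult_nonneg_nonneg) auto

text \<open>Cauchy-Schwarz with the weights \<open>a\<close> gives
  \<open>(int_conv a b k)\<^sup>2 \<le> (\<Sum>\<^sub>j a j) (\<Sum>\<^sub>j a j b(k - j)\<^sup>2)\<close>; summing over \<open>k\<close> finishes.\<close>
lemma young_l1_l2:
  fixes a b :: "int \<Rightarrow> real"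
  assumes a0: "\<And>j. a j \<ge> 0" and b0: "\<And>j. b j \<ge> 0"
    and as: "a summable_on UNIV" and bs: "(\<lambda>j. (b j)\<^sup>2) summable_on UNIV"
  shows "(\<lambda>j. a j * b (k - j)) summable_on UNIV"
    and "(\<lambda>k. (int_conv a b k)\<^sup>2) summable_on UNIV"
    and "infsum (\<lambda>k. (int_conv a b k)\<^sup>2) UNIV \<le> (infsum a UNIV)\<^sup>2 * infsum (\<lambda>j. (b j)\<^sup>2) UNIV"
proof -
  define A where "A = infsum a UNIV"
  define B where "B = infsum (\<lambda>j. (b j)\<^sup>2) UNIV"
  define D where "D k = infsum (\<lambda>j. a j * (b (k - j))\<^sup>2) UNIV" for k
  have A0: "A \<ge> 0" unfolding A_def using a0 by (simp add: infsum_nonneg)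
  have b_le: "(b m)\<^sup>2 \<le> B" for m
    using finite_sum_le_infsum[OF bs, of "{m}"] unfolding B_def by simp
  have Ds: "(\<lambda>j. a j * (b (k - j))\<^sup>2) summable_on UNIV" for k
    using a0 b_le
    by (intro summable_on_comparison_test[OF summable_on_cmult_left[OF as, of B]])
      (auto intro: mult_left_mono)
  have CS: "(\<lambda>j. sqrt (a j) * (sqrt (a j) * b (k - j))) summable_on UNIV \<and>
      infsum (\<lambda>j. sqrt (a j) * (sqrt (a j) * b (k - j))) UNIV \<le> sqrt (A * D k)" for k
    using infsum_Cauchy_Schwarz[of UNIV "\<lambda>j. sqrt (a j)" "\<lambda>j. sqrt (a j) * b (k - j)"] as Ds[of k]
    by (simp add: a0 b0 power_mult_distrib A_def D_def)
  have sqrt_a: "sqrt (a j) * (sqrt (a j) * x) = a j * x" for j x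
    using a0[of j] by (simp add: mult.assoc[symmetric])
  show summable: "(\<lambda>j. a j * b (k - j)) summable_on UNIV" for k
    using CS[of k] by (simp add: sqrt_a)
  have conv_sq: "(int_conv a b k)\<^sup>2 \<le> A * D k" for k
  proof -
    have "int_conv a b k \<le> sqrt (A * D k)"
      using CS[of k] by (simp add: sqrt_a int_conv_def)
    moreover have "D k \<ge> 0"
      unfolding D_def using a0 by (simp add: infsum_nonneg)
    ultimately show ?thesis
      using int_conv_nonneg[of a b k] a0 b0 A0 by (metis power_mono real_sqrt_pow2 zero_le_mult_iff)
  qed
  have finite_sums: "(\<Sum>k\<in>K. (int_conv a b k)\<^sup>2) \<le> A\<^sup>2 * B" if "finite K" for K
  proof -
    have shifted: "(\<Sum>k\<in>K. (b (k - j))\<^sup>2) \<le> B" for j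
    proof -
      have "(\<Sum>k\<in>K. (b (k - j))\<^sup>2) = (\<Sum>m\<in>(\<lambda>k. k - j) ` K. (b m)\<^sup>2)"
        by (subst sum.reindex) (auto simp: inj_on_def)
      also have "\<dots> \<le> B"
        unfolding B_def using that by (intro finite_sum_le_infsum[OF bs]) auto
      finally show ?thesis .
    qed
    have "(\<Sum>k\<in>K. (int_conv a b k)\<^sup>2) \<le> A * (\<Sum>k\<in>K. D k)"
      by (simp add: sum_distrib_left sum_mono conv_sq)
    also have "(\<Sum>k\<in>K. D k) = infsum (\<lambda>j. \<Sum>k\<in>K. a j * (b (k - j))\<^sup>2) UNIV"
      unfolding D_def using that Ds by (simp add: infsum_sum_swap)
    also have "\<dots> \<le> infsum (\<lambda>j. a j * B) UNIV"
      using that Ds a0 shifted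
      by (intro infsum_mono infsum_sum_swap summable_on_cmult_left as)
        (auto simp flip: sum_distrib_left intro: mult_left_mono)
    also have "\<dots> = A * B"
      unfolding A_def using as by (rule infsum_cmult_left)
    finally show ?thesis
      using A0 by (simp add: power2_eq_square mult_left_mono mult.assoc)
  qed
  have "(\<lambda>k. (int_conv a b k)\<^sup>2) summable_on UNIV \<and> infsum (\<lambda>k. (int_conv a b k)\<^sup>2) UNIV \<le> A\<^sup>2 * B"
    using finite_sums by (intro nonneg_summable_on_infsum_le) auto
  then show "(\<lambda>k. (int_conv a b k)\<^sup>2) summable_on UNIV"
    and "infsum (\<lambda>k. (int_conv a b k)\<^sup>2) UNIV \<le> (infsum a UNIV)\<^sup>2 * infsum (\<lambda>j. (b j)\<^sup>2) UNIV"
    unfolding A_def B_def by auto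
qed

section \<open>The weighted sequence space\<close>

definition hs_coeff :: "real \<Rightarrow> (int \<Rightarrow> complex) \<Rightarrow> int \<Rightarrow> real" where
  "hs_coeff s f k = real_of_int \<bar>k\<bar> powr s * cmod (f k)"

definition hs_summable :: "real \<Rightarrow> (int \<Rightarrow> complex) \<Rightarrow> bool" where
  "hs_summable s f \<longleftrightarrow> (\<lambda>k. (hs_coeff s f k)\<^sup>2) summable_on UNIV"

definition real_mean_zero :: "(int \<Rightarrow> complex) \<Rightarrow> bool" where
  "real_mean_zero f \<longleftrightarrow> f 0 = 0 \<and> (\<forall>k. cnj (f k) = f (- k))"

lemma hs_coeff_nonneg: "hs_coeff s f k \<ge> 0"
  unfolding hs_coeff_def by simp

lemma hs_coeff_sq: "(hs_coeff s f k)\<^sup>2 = real_of_int \<bar>k\<bar> powr (2 * s) * (cmod (f k))\<^sup>2"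
  unfolding hs_coeff_def by (simp add: power_mult_distrib power2_eq_square powr_add[symmetric])

text \<open>The weight vanishes at \<open>k = 0\<close> (\<open>0 powr s = 0\<close>), so the mode \<open>0\<close> may be included in all sums.\<close>
lemma hs_norm2_eq_infsum: "hs_norm2 s f = infsum (\<lambda>k. (hs_coeff s f k)\<^sup>2) UNIV"
  unfolding hs_norm2_def hs_coeff_sq by (rule infsum_cong_neutral) auto

lemma in_Hs_iff: "in_Hs s f \<longleftrightarrow> real_mean_zero f \<and> hs_summable s f"
  unfolding in_Hs_def real_mean_zero_def hs_summable_def hs_coeff_sq
  by (subst summable_on_cong_neutral[where T = UNIV]) auto

lemma hs_norm2_nonneg: "hs_norm2 s f \<ge> 0"
  unfolding hs_norm2_eq_infsum by (simp add: infsum_nonneg)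

lemma hs_summable_le_infsum:
  assumes "d summable_on UNIV" "\<And>k. (hs_coeff s h k)\<^sup>2 \<le> d k"
  shows "hs_summable s h \<and> hs_norm2 s h \<le> infsum d UNIV"
proof -
  have "hs_summable s h"
    unfolding hs_summable_def by (rule summable_on_comparison_test[OF assms(1)]) (use assms(2) in auto)
  then show ?thesis
    unfolding hs_norm2_eq_infsum hs_summable_def using assms by (auto intro: infsum_mono)
qed

lemma hs_summable_dominated:
  assumes "hs_summable s f" "\<And>k. cmod (h k) \<le> cmod (f k)"
  shows "hs_summable s h \<and> hs_norm2 s h \<le> hs_norm2 s f"
proof -
  have "(hs_coeff s h k)\<^sup>2 \<le> (hs_coeff s f k)\<^sup>2" for k
    unfolding hs_coeff_def using assms(2)[of k] by (intro power_mono mult_left_mono) auto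
  then show ?thesis
    using hs_summable_le_infsum[of "\<lambda>k. (hs_coeff s f k)\<^sup>2" s h] assms(1)
    unfolding hs_summable_def hs_norm2_eq_infsum by blast
qed

lemma hs_summable_triangle:
  assumes f: "hs_summable s f" and g: "hs_summable s g"
    and h: "\<And>k. cmod (h k) \<le> cmod (f k) + cmod (g k)"
  shows "hs_summable s h \<and> hs_norm2 s h \<le> 2 * (hs_norm2 s f + hs_norm2 s g)"
proof -
  have "(hs_coeff s h k)\<^sup>2 \<le> 2 * (hs_coeff s f k)\<^sup>2 + 2 * (hs_coeff s g k)\<^sup>2" for k
  proof -
    have "hs_coeff s h k \<le> hs_coeff s f k + hs_coeff s g k"
      unfolding hs_coeff_def distrib_left[symmetric] using h[of k] by (intro mult_left_mono) auto
    then have "(hs_coeff s h k)\<^sup>2 \<le> (hs_coeff s f k + hs_coeff s g k)\<^sup>2"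
      by (intro power_mono) (auto simp: hs_coeff_nonneg)
    also have "\<dots> \<le> 2 * (hs_coeff s f k)\<^sup>2 + 2 * (hs_coeff s g k)\<^sup>2"
      using zero_le_power2[of "hs_coeff s f k - hs_coeff s g k"]
      unfolding power2_diff power2_sum by linarith
    finally show ?thesis .
  qed
  moreover have "((\<lambda>k. 2 * (hs_coeff s f k)\<^sup>2 + 2 * (hs_coeff s g k)\<^sup>2) has_sum
      (2 * hs_norm2 s f + 2 * hs_norm2 s g)) UNIV"
    using f g unfolding hs_summable_def hs_norm2_eq_infsum
    by (intro has_sum_add has_sum_cmult_right) auto
  ultimately show ?thesis
    using hs_summable_le_infsum[of "\<lambda>k. 2 * (hs_coeff s f k)\<^sup>2 + 2 * (hs_coeff s g k)\<^sup>2" s h]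
    unfolding has_sum_iff by auto
qed

lemma hs_summable_diff:
  "hs_summable s f \<Longrightarrow> hs_summable s g \<Longrightarrow> hs_summable s (\<lambda>k. f k - g k)"
  using hs_summable_triangle[of s f g "\<lambda>k. f k - g k"] norm_triangle_ineq4 by blast

lemma hs_summable_projP:
  assumes "hs_summable s f"
  shows "hs_summable s (projP N f)" and "hs_norm2 s (projP N f) \<le> hs_norm2 s f"
  using hs_summable_dominated[OF assms, of "projP N f"] by (auto simp: projP_def)

lemma hs_summable_projQ:
  assumes "hs_summable s f"
  shows "hs_summable s (projQ N f)" and "hs_norm2 s (projQ N f) \<le> hs_norm2 s f"
  using hs_summable_dominated[OF assms, of "projQ N f"] by (auto simp: projQ_def)

definition inverse_square_sum :: real where
  "inverse_square_sum = infsum (\<lambda>k::int. 1 / (real_of_int k)\<^sup>2) UNIV"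

lemma inverse_square_sum_nonneg: "inverse_square_sum \<ge> 0"
  unfolding inverse_square_sum_def by (simp add: infsum_nonneg)

lemma hs_coeff_weighted_summable:
  assumes "hs_summable s f"
  shows "(\<lambda>j. hs_coeff s f j / real_of_int \<bar>j\<bar>) summable_on UNIV \<and>
    infsum (\<lambda>j. hs_coeff s f j / real_of_int \<bar>j\<bar>) UNIV \<le> sqrt (hs_norm2 s f * inverse_square_sum)"
  using infsum_Cauchy_Schwarz[of UNIV "hs_coeff s f" "\<lambda>j. 1 / real_of_int \<bar>j\<bar>"]
    assms summable_on_inverse_square_int
  by (simp add: hs_coeff_nonneg hs_summable_def hs_norm2_eq_infsum inverse_square_sum_def power_divide)

section \<open>The bilinear operator B2\<close>

definition B2_summand :: "real \<Rightarrow> (int \<Rightarrow> complex) \<Rightarrow> (int \<Rightarrow> complex) \<Rightarrow> int \<Rightarrow> int \<Rightarrow> complex" where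
  "B2_summand t f g k j = exp (\<i> * of_real (3 * real_of_int k * real_of_int j * real_of_int (k - j) * t))
     / of_int (j * (k - j)) * f j * g (k - j)"

lemma B2_eq:
  "B2 t f g k = (if k = 0 then 0 else 1/6 * infsum (B2_summand t f g k) {j. j \<noteq> 0 \<and> j \<noteq> k})"
  unfolding B2_def B2_summand_def by simp

lemma norm_B2_summand:
  "cmod (B2_summand t f g k j) = cmod (f j) * cmod (g (k - j)) / (real_of_int \<bar>j\<bar> * real_of_int \<bar>k - j\<bar>)"
proof -
  have "cmod (of_int (j * (k - j)) :: complex) = real_of_int \<bar>j\<bar> * real_of_int \<bar>k - j\<bar>"
    by (metis abs_mult norm_of_int of_int_abs of_int_mult)
  then show ?thesis
    unfolding B2_summand_def norm_mult norm_divide norm_exp_i_times by simp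
qed

lemma le_powr_mult: "(1::real) \<le> x \<Longrightarrow> 0 \<le> s \<Longrightarrow> 0 \<le> c \<Longrightarrow> c \<le> x powr s * c"
  by (simp add: mult_le_cancel_right1 ge_one_powr_ge_zero)

lemma div_mult_le_powr:
  fixes x y s F G :: real
  assumes "x \<ge> 1" "y \<ge> 1" "s \<ge> 0" "F \<ge> 0" "G \<ge> 0"
  shows "F * G / (x * y) \<le> x powr s * F / x * (y powr s * G)"
proof -
  have "F / x \<le> x powr s * F / x"
    using assms by (intro divide_right_mono le_powr_mult) auto
  moreover have "G / y \<le> G"
    using assms by (simp add: divide_le_eq mult_le_cancel_left1)
  then have "G / y \<le> y powr s * G"
    using assms le_powr_mult[of y s G] by linarith
  ultimately have "F / x * (G / y) \<le> x powr s * F / x * (y powr s * G)"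
    using assms by (intro mult_mono) auto
  then show ?thesis by simp
qed

text \<open>Since \<open>x + y \<le> 2 x y\<close>, the weight \<open>z\<^sup>s\<close> splits as \<open>2\<^sup>s x\<^sup>s y\<^sup>s\<close>; the remaining denominator \<open>y > N\<close>
  is traded for \<open>1 / N\<close>.\<close>
lemma high_frequency_weight_le:
  fixes x y z s F G N :: real
  assumes x: "x \<ge> 1" and y: "y \<ge> 1" and s: "s \<ge> 0" and z: "0 \<le> z" "z \<le> x + y"
    and FG: "F \<ge> 0" "G \<ge> 0" and N: "N > 0" and high: "G \<noteq> 0 \<Longrightarrow> y > N"
  shows "z powr s * (F * G / (x * y)) \<le> 2 powr s / N * (x powr s * F / x * (y powr s * G))"
proof (cases "G = 0")
  case False
  have "x \<le> x * y" "y \<le> x * y"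
    using x y by (simp_all add: mult_le_cancel_left1 mult_le_cancel_right1)
  then have "z powr s \<le> (2 * x * y) powr s"
    using z s by (intro powr_mono2) auto
  also have "\<dots> = 2 powr s * x powr s * y powr s"
    using x y by (simp add: powr_mult)
  finally have "z powr s * (F * G / (x * y)) \<le> 2 powr s * x powr s * y powr s * (F * G / (x * y))"
    using FG x y by (intro mult_right_mono) auto
  also have "\<dots> = 2 powr s * (x powr s * F / x) * (y powr s * G) / y"
    using x y by (simp add: field_simps)
  also have "\<dots> \<le> 2 powr s * (x powr s * F / x) * (y powr s * G) / N"
    using high[OF False] FG N x by (intro divide_left_mono) auto
  finally show ?thesis by (simp add: mult_ac)
qed simp

lemma B2_summand_le:
  assumes "s \<ge> 0" "j \<noteq> 0" "j \<noteq> k"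
  shows "cmod (B2_summand t f g k j) \<le> hs_coeff s f j / real_of_int \<bar>j\<bar> * hs_coeff s g (k - j)"
  unfolding norm_B2_summand hs_coeff_def by (rule div_mult_le_powr) (use assms in auto)

lemma B2_summand_weighted_le:
  assumes "s \<ge> 0" "0 < N" "j \<noteq> 0" "j \<noteq> k" and high: "\<And>m. \<bar>m\<bar> \<le> int N \<Longrightarrow> g m = 0"
  shows "real_of_int \<bar>k\<bar> powr s * cmod (B2_summand t f g k j)
    \<le> 2 powr s / real N * (hs_coeff s f j / real_of_int \<bar>j\<bar> * hs_coeff s g (k - j))"
proof -
  have "cmod (g (k - j)) \<noteq> 0 \<Longrightarrow> real_of_int \<bar>k - j\<bar> > real N"
    using high[of "k - j"] by force
  with assms show ?thesis
    unfolding norm_B2_summand hs_coeff_def by (intro high_frequency_weight_le) auto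
qed

lemma hs_weighted_conv_summable:
  assumes "hs_summable s f" "hs_summable s g"
  shows "(\<lambda>j. hs_coeff s f j / real_of_int \<bar>j\<bar> * hs_coeff s g (k - j)) summable_on UNIV"
  using assms hs_coeff_weighted_summable[of s f]
  by (intro young_l1_l2(1)) (auto simp: hs_coeff_nonneg hs_summable_def)

lemma B2_summand_summable:
  assumes "s \<ge> 0" "hs_summable s f" "hs_summable s g"
  shows "(\<lambda>j. cmod (B2_summand t f g k j)) summable_on {j. j \<noteq> 0 \<and> j \<noteq> k}"
    and "B2_summand t f g k summable_on {j. j \<noteq> 0 \<and> j \<noteq> k}"
proof -
  have "(\<lambda>j. hs_coeff s f j / real_of_int \<bar>j\<bar> * hs_coeff s g (k - j))
      summable_on {j. j \<noteq> 0 \<and> j \<noteq> k}"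
    by (rule summable_on_subset[OF hs_weighted_conv_summable[OF assms(2,3)]]) simp
  then show "(\<lambda>j. cmod (B2_summand t f g k j)) summable_on {j. j \<noteq> 0 \<and> j \<noteq> k}"
    by (rule summable_on_comparison_test) (use B2_summand_le[OF assms(1)] in auto)
  then show "B2_summand t f g k summable_on {j. j \<noteq> 0 \<and> j \<noteq> k}"
    by (rule abs_summable_summable)
qed

lemma B2_commute: "B2 t f g = B2 t g f"
proof
  fix k :: int
  define S where "S = {j. j \<noteq> 0 \<and> j \<noteq> k}"
  have "bij_betw (\<lambda>j. k - j) S S"
    unfolding S_def by (rule bij_betwI[where g = "\<lambda>j. k - j"]) auto
  then have "infsum (\<lambda>j. B2_summand t g f k (k - j)) S = infsum (B2_summand t g f k) S"
    by (rule infsum_reindex_bij_betw)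
  moreover have "B2_summand t g f k (k - j) = B2_summand t f g k j" for j
    unfolding B2_summand_def by (simp add: algebra_simps)
  ultimately show "B2 t f g k = B2 t g f k"
    unfolding B2_eq S_def by simp
qed

lemma B2_diff_left:
  assumes "s \<ge> 0" "hs_summable s f" "hs_summable s f'" "hs_summable s g"
  shows "B2 t f g k - B2 t f' g k = B2 t (\<lambda>j. f j - f' j) g k"
proof -
  have "B2_summand t (\<lambda>j. f j - f' j) g k = (\<lambda>j. B2_summand t f g k j - B2_summand t f' g k j)"
    unfolding B2_summand_def by (simp only: mult.assoc left_diff_distrib right_diff_distrib)
  then show ?thesis
    unfolding B2_eq
    by (simp add: infsum_diff B2_summand_summable(2)[OF assms(1)] assms right_diff_distrib)
qed

lemma B2_diff_right:
  assumes "s \<ge> 0" "hs_summable s f" "hs_summable s g" "hs_summable s g'"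
  shows "B2 t f g k - B2 t f g' k = B2 t f (\<lambda>j. g j - g' j) k"
  unfolding B2_commute[of t f] using assms(1,3,4,2) by (rule B2_diff_left)

lemma B2_diff:
  assumes "s \<ge> 0" "hs_summable s f" "hs_summable s f'" "hs_summable s g" "hs_summable s g'"
  shows "B2 t f g k - B2 t f' g' k = B2 t (\<lambda>j. f j - f' j) g k + B2 t f' (\<lambda>j. g j - g' j) k"
proof -
  have "B2 t f g k - B2 t f' g' k = (B2 t f g k - B2 t f' g k) + (B2 t f' g k - B2 t f' g' k)"
    by simp
  also have "\<dots> = B2 t (\<lambda>j. f j - f' j) g k + B2 t f' (\<lambda>j. g j - g' j) k"
    using assms by (simp add: B2_diff_left B2_diff_right)
  finally show ?thesis .
qed

lemma hs_coeff_B2_le: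
  assumes s: "s \<ge> 0" and N: "0 < N" and f: "hs_summable s f" and g: "hs_summable s g"
    and high: "\<And>m. \<bar>m\<bar> \<le> int N \<Longrightarrow> g m = 0"
  shows "hs_coeff s (B2 t f g) k
    \<le> 2 powr s / (6 * real N) * int_conv (\<lambda>j. hs_coeff s f j / real_of_int \<bar>j\<bar>) (hs_coeff s g) k"
proof (cases "k = 0")
  case True
  then show ?thesis
    by (simp add: hs_coeff_def int_conv_nonneg hs_coeff_nonneg)
next
  case False
  define S where "S = {j. j \<noteq> 0 \<and> j \<noteq> k}"
  define w where "w = real_of_int \<bar>k\<bar> powr s"
  define M where "M = 2 powr s / real N"
  have T: "(\<lambda>j. cmod (B2_summand t f g k j)) summable_on S"
    unfolding S_def using s f g by (rule B2_summand_summable)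
  have "w * cmod (infsum (B2_summand t f g k) S) \<le> w * infsum (\<lambda>j. cmod (B2_summand t f g k j)) S"
    unfolding w_def using T by (intro mult_left_mono norm_infsum_bound) auto
  also have "\<dots> = infsum (\<lambda>j. w * cmod (B2_summand t f g k j)) S"
    using T by (rule infsum_cmult_right[symmetric])
  also have "\<dots> \<le> infsum (\<lambda>j. M * (hs_coeff s f j / real_of_int \<bar>j\<bar> * hs_coeff s g (k - j))) UNIV"
    using T f g B2_summand_weighted_le[OF s N _ _ high]
    by (intro infsum_mono_neutral summable_on_cmult_right hs_weighted_conv_summable)
      (auto simp: S_def w_def M_def hs_coeff_nonneg)
  also have "\<dots> = M * int_conv (\<lambda>j. hs_coeff s f j / real_of_int \<bar>j\<bar>) (hs_coeff s g) k"
    unfolding int_conv_def using hs_weighted_conv_summable[OF f g] by (rule infsum_cmult_right)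
  finally show ?thesis
    using False unfolding hs_coeff_def B2_eq S_def w_def M_def by (simp add: norm_mult)
qed

definition B2_const :: "real \<Rightarrow> real" where
  "B2_const s = (2 powr s / 6)\<^sup>2 * inverse_square_sum"

lemma hs_norm2_B2_high_right:
  assumes s: "s \<ge> 0" and N: "0 < N" and f: "hs_summable s f" and g: "hs_summable s g"
    and high: "\<And>m. \<bar>m\<bar> \<le> int N \<Longrightarrow> g m = 0"
  shows "hs_summable s (B2 t f g) \<and>
    hs_norm2 s (B2 t f g) \<le> B2_const s / (real N)\<^sup>2 * (hs_norm2 s f * hs_norm2 s g)"
proof -
  define a where "a j = hs_coeff s f j / real_of_int \<bar>j\<bar>" for j
  define c where "c = 2 powr s / (6 * real N)"
  have a0: "a j \<ge> 0" for j
    unfolding a_def by (simp add: hs_coeff_nonneg)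
  have a_sum: "a summable_on UNIV" "infsum a UNIV \<le> sqrt (hs_norm2 s f * inverse_square_sum)"
    using hs_coeff_weighted_summable[OF f] unfolding a_def[symmetric] by auto
  have "(infsum a UNIV)\<^sup>2 \<le> (sqrt (hs_norm2 s f * inverse_square_sum))\<^sup>2"
    using a_sum(2) a0 by (intro power_mono infsum_nonneg) auto
  then have a_sq: "(infsum a UNIV)\<^sup>2 \<le> hs_norm2 s f * inverse_square_sum"
    by (simp add: hs_norm2_nonneg inverse_square_sum_nonneg)
  have conv: "(\<lambda>k. (int_conv a (hs_coeff s g) k)\<^sup>2) summable_on UNIV"
      "infsum (\<lambda>k. (int_conv a (hs_coeff s g) k)\<^sup>2) UNIV \<le> (infsum a UNIV)\<^sup>2 * hs_norm2 s g"
    using young_l1_l2(2,3)[OF a0 hs_coeff_nonneg a_sum(1)] g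
    by (simp_all add: hs_summable_def hs_norm2_eq_infsum)
  have "hs_coeff s (B2 t f g) k \<le> c * int_conv a (hs_coeff s g) k" for k
    unfolding a_def c_def by (rule hs_coeff_B2_le[OF s N f g high])
  then have "(hs_coeff s (B2 t f g) k)\<^sup>2 \<le> c\<^sup>2 * (int_conv a (hs_coeff s g) k)\<^sup>2" for k
    by (metis power_mono power_mult_distrib hs_coeff_nonneg)
  then have "hs_summable s (B2 t f g) \<and>
      hs_norm2 s (B2 t f g) \<le> infsum (\<lambda>k. c\<^sup>2 * (int_conv a (hs_coeff s g) k)\<^sup>2) UNIV"
    using conv(1) by (intro hs_summable_le_infsum summable_on_cmult_right)
  moreover have "infsum (\<lambda>k. c\<^sup>2 * (int_conv a (hs_coeff s g) k)\<^sup>2) UNIV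
      \<le> c\<^sup>2 * (hs_norm2 s f * inverse_square_sum * hs_norm2 s g)"
    using conv a_sq hs_norm2_nonneg[of s g]
    by (simp add: infsum_cmult_right mult_left_mono mult_right_mono order_trans)
  moreover have "c\<^sup>2 * (hs_norm2 s f * inverse_square_sum * hs_norm2 s g)
      = B2_const s / (real N)\<^sup>2 * (hs_norm2 s f * hs_norm2 s g)"
    unfolding c_def B2_const_def by (simp add: power_divide power_mult_distrib)
  ultimately show ?thesis by simp
qed

lemma hs_norm2_B2_high_left:
  assumes "s \<ge> 0" "0 < N" "hs_summable s f" "hs_summable s g"
    and "\<And>m. \<bar>m\<bar> \<le> int N \<Longrightarrow> f m = 0"
  shows "hs_summable s (B2 t f g) \<and>
    hs_norm2 s (B2 t f g) \<le> B2_const s / (real N)\<^sup>2 * (hs_norm2 s f * hs_norm2 s g)"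
  using hs_norm2_B2_high_right[OF assms(1,2,4,3,5), of t] by (simp add: B2_commute mult.commute)

lemma B2_summand_cnj:
  assumes "real_mean_zero f" "real_mean_zero g"
  shows "cnj (B2_summand t f g k j) = B2_summand t f g (- k) (- j)"
proof -
  have "f (- j) = cnj (f j)" "g (- k - - j) = cnj (g (k - j))"
    using assms unfolding real_mean_zero_def by (metis, metis minus_diff_eq diff_minus_eq_add uminus_add_conv_diff)
  then show ?thesis
    unfolding B2_summand_def by (simp add: exp_cnj algebra_simps)
qed

lemma real_mean_zero_B2:
  assumes "real_mean_zero f" "real_mean_zero g"
  shows "real_mean_zero (B2 t f g)"
  unfolding real_mean_zero_def
proof (intro conjI allI)
  show "B2 t f g 0 = 0" by (simp add: B2_eq)
  fix k :: int
  have "bij_betw uminus {j. j \<noteq> 0 \<and> j \<noteq> k} {j. j \<noteq> 0 \<and> j \<noteq> - k}"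
    by (rule bij_betwI[where g = uminus]) auto
  then have "infsum (\<lambda>j. B2_summand t f g (- k) (- j)) {j. j \<noteq> 0 \<and> j \<noteq> k}
      = infsum (B2_summand t f g (- k)) {j. j \<noteq> 0 \<and> j \<noteq> - k}"
    by (rule infsum_reindex_bij_betw)
  then show "cnj (B2 t f g k) = B2 t f g (- k)"
    unfolding B2_eq by (simp flip: B2_summand_cnj[OF assms])
qed

lemma real_mean_zero_projP: "real_mean_zero f \<Longrightarrow> real_mean_zero (projP N f)"
  unfolding real_mean_zero_def projP_def by auto

lemma real_mean_zero_projQ: "real_mean_zero f \<Longrightarrow> real_mean_zero (projQ N f)"
  unfolding real_mean_zero_def projQ_def by auto

lemma real_mean_zero_add: "real_mean_zero f \<Longrightarrow> real_mean_zero g \<Longrightarrow> real_mean_zero (\<lambda>k. f k + g k)"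
  unfolding real_mean_zero_def by auto

lemma real_mean_zero_diff: "real_mean_zero f \<Longrightarrow> real_mean_zero g \<Longrightarrow> real_mean_zero (\<lambda>k. f k - g k)"
  unfolding real_mean_zero_def by auto

section \<open>The operator BQ\<close>

definition B2Q :: "nat \<Rightarrow> real \<Rightarrow> (int \<Rightarrow> complex) \<Rightarrow> (int \<Rightarrow> complex) \<Rightarrow> int \<Rightarrow> complex" where
  "B2Q N t u v = (\<lambda>k. B2 t (projP N u) (projQ N v) k + B2 t (projQ N u) v k)"

lemma BQ_eq_B2Q:
  "BQ N t u v = ((\<lambda>k. B2Q N t u v k - B2Q N t u u k), (\<lambda>k. B2Q N t u v k - B2Q N t v v k))"
  unfolding BQ_def B2Q_def by simp

lemma real_mean_zero_B2Q: "real_mean_zero u \<Longrightarrow> real_mean_zero v \<Longrightarrow> real_mean_zero (B2Q N t u v)"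
  unfolding B2Q_def
  by (intro real_mean_zero_add real_mean_zero_B2 real_mean_zero_projP real_mean_zero_projQ)

lemma hs_norm2_B2Q:
  assumes s: "s \<ge> 0" and N: "0 < N" and u: "hs_summable s u" and v: "hs_summable s v"
  shows "hs_summable s (B2Q N t u v) \<and>
    hs_norm2 s (B2Q N t u v) \<le> 4 * (B2_const s / (real N)\<^sup>2) * (hs_norm2 s u * hs_norm2 s v)"
proof -
  define E where "E = B2_const s / (real N)\<^sup>2"
  have E0: "E \<ge> 0"
    unfolding E_def B2_const_def by (simp add: inverse_square_sum_nonneg)
  have Pu: "hs_summable s (projP N u)" "hs_norm2 s (projP N u) \<le> hs_norm2 s u"
    and Qu: "hs_summable s (projQ N u)" "hs_norm2 s (projQ N u) \<le> hs_norm2 s u"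
    and Qv: "hs_summable s (projQ N v)" "hs_norm2 s (projQ N v) \<le> hs_norm2 s v"
    using hs_summable_projP[OF u] hs_summable_projQ[OF u] hs_summable_projQ[OF v] by blast+
  have high: "\<bar>m\<bar> \<le> int N \<Longrightarrow> projQ N f m = 0" for f m
    by (simp add: projQ_def)
  have "hs_norm2 s (projP N u) * hs_norm2 s (projQ N v) \<le> hs_norm2 s u * hs_norm2 s v"
    "hs_norm2 s (projQ N u) * hs_norm2 s v \<le> hs_norm2 s u * hs_norm2 s v"
    using Pu Qu Qv by (auto intro!: mult_mono simp: hs_norm2_nonneg)
  then have "hs_summable s (B2 t (projP N u) (projQ N v)) \<and>
      hs_norm2 s (B2 t (projP N u) (projQ N v)) \<le> E * (hs_norm2 s u * hs_norm2 s v)"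
    "hs_summable s (B2 t (projQ N u) v) \<and>
      hs_norm2 s (B2 t (projQ N u) v) \<le> E * (hs_norm2 s u * hs_norm2 s v)"
    using hs_norm2_B2_high_right[OF s N Pu(1) Qv(1) high, of t]
      hs_norm2_B2_high_left[OF s N Qu(1) v high, of t] E0 unfolding E_def
    by (meson mult_left_mono order_trans)+
  moreover have "hs_summable s (B2Q N t u v) \<and> hs_norm2 s (B2Q N t u v)
      \<le> 2 * (hs_norm2 s (B2 t (projP N u) (projQ N v)) + hs_norm2 s (B2 t (projQ N u) v))"
    using calculation unfolding B2Q_def by (intro hs_summable_triangle norm_triangle_ineq) auto
  ultimately have "hs_summable s (B2Q N t u v) \<and>
      hs_norm2 s (B2Q N t u v) \<le> 4 * (E * (hs_norm2 s u * hs_norm2 s v))"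
    by auto
  then show ?thesis
    unfolding E_def by (simp add: mult.assoc)
qed

lemma projP_diff: "projP N (\<lambda>k. u k - u' k) = (\<lambda>k. projP N u k - projP N u' k)"
  unfolding projP_def by auto

lemma projQ_diff: "projQ N (\<lambda>k. u k - u' k) = (\<lambda>k. projQ N u k - projQ N u' k)"
  unfolding projQ_def by auto

lemma B2Q_diff:
  assumes "s \<ge> 0" "hs_summable s u" "hs_summable s v" "hs_summable s u'" "hs_summable s v'"
  shows "B2Q N t u v k - B2Q N t u' v' k = B2Q N t (\<lambda>j. u j - u' j) v k + B2Q N t u' (\<lambda>j. v j - v' j) k"
proof -
  have "B2 t (projP N u) (projQ N v) k - B2 t (projP N u') (projQ N v') k
      = B2 t (projP N (\<lambda>j. u j - u' j)) (projQ N v) k + B2 t (projP N u') (projQ N (\<lambda>j. v j - v' j)) k"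
    unfolding projP_diff projQ_diff using assms by (intro B2_diff hs_summable_projP(1) hs_summable_projQ(1))
  moreover have "B2 t (projQ N u) v k - B2 t (projQ N u') v' k
      = B2 t (projQ N (\<lambda>j. u j - u' j)) v k + B2 t (projQ N u') (\<lambda>j. v j - v' j) k"
    unfolding projQ_diff using assms by (intro B2_diff hs_summable_projQ(1))
  ultimately show ?thesis
    unfolding B2Q_def by (simp add: algebra_simps)
qed

lemma hs_norm2_B2Q_diff:
  assumes s: "s \<ge> 0" and N: "0 < N"
    and u: "hs_summable s u" and v: "hs_summable s v" and u': "hs_summable s u'" and v': "hs_summable s v'"
    and D: "hs_norm2 s (\<lambda>k. u k - u' k) \<le> D" "hs_norm2 s (\<lambda>k. v k - v' k) \<le> D"
    and V: "hs_norm2 s v \<le> V" "hs_norm2 s u' \<le> V'"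
  shows "hs_summable s (\<lambda>k. B2Q N t u v k - B2Q N t u' v' k) \<and>
    hs_norm2 s (\<lambda>k. B2Q N t u v k - B2Q N t u' v' k) \<le> 8 * (B2_const s / (real N)\<^sup>2) * (D * (V + V'))"
proof -
  define E where "E = B2_const s / (real N)\<^sup>2"
  have E0: "E \<ge> 0"
    unfolding E_def B2_const_def by (simp add: inverse_square_sum_nonneg)
  have du: "hs_summable s (\<lambda>k. u k - u' k)" and dv: "hs_summable s (\<lambda>k. v k - v' k)"
    using u u' v v' by (simp_all add: hs_summable_diff)
  have "hs_norm2 s (\<lambda>k. u k - u' k) * hs_norm2 s v \<le> D * V"
    "hs_norm2 s u' * hs_norm2 s (\<lambda>k. v k - v' k) \<le> V' * D"
    using D V by (auto intro!: mult_mono simp: hs_norm2_nonneg intro: order_trans[OF hs_norm2_nonneg])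
  then have "hs_summable s (B2Q N t (\<lambda>k. u k - u' k) v) \<and>
      hs_norm2 s (B2Q N t (\<lambda>k. u k - u' k) v) \<le> 4 * E * (D * V)"
    "hs_summable s (B2Q N t u' (\<lambda>k. v k - v' k)) \<and>
      hs_norm2 s (B2Q N t u' (\<lambda>k. v k - v' k)) \<le> 4 * E * (V' * D)"
    using hs_norm2_B2Q[OF s N du v, of t] hs_norm2_B2Q[OF s N u' dv, of t] E0 unfolding E_def
    by (meson mult_left_mono order_trans zero_le_mult_iff zero_le_numeral)+
  moreover have "hs_summable s (\<lambda>k. B2Q N t u v k - B2Q N t u' v' k) \<and>
      hs_norm2 s (\<lambda>k. B2Q N t u v k - B2Q N t u' v' k)
      \<le> 2 * (hs_norm2 s (B2Q N t (\<lambda>k. u k - u' k) v) + hs_norm2 s (B2Q N t u' (\<lambda>k. v k - v' k)))"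
    using calculation unfolding B2Q_diff[OF s u v u' v']
    by (intro hs_summable_triangle norm_triangle_ineq) auto
  ultimately show ?thesis
    unfolding E_def[symmetric] by (auto simp: algebra_simps)
qed

lemma hs_norm2_B2Q_sub_diag:
  assumes s: "s \<ge> 0" and N: "0 < N"
    and x: "hs_summable s x" and y: "hs_summable s y" and w: "hs_summable s w"
    and U: "hs_norm2 s x \<le> U" "hs_norm2 s y \<le> U" "hs_norm2 s w \<le> U"
  shows "hs_summable s (\<lambda>k. B2Q N t x y k - B2Q N t w w k) \<and>
    hs_norm2 s (\<lambda>k. B2Q N t x y k - B2Q N t w w k) \<le> 16 * (B2_const s / (real N)\<^sup>2) * U\<^sup>2"
proof -
  define E where "E = B2_const s / (real N)\<^sup>2"
  have E0: "E \<ge> 0"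
    unfolding E_def B2_const_def by (simp add: inverse_square_sum_nonneg)
  have "hs_norm2 s x * hs_norm2 s y \<le> U\<^sup>2" "hs_norm2 s w * hs_norm2 s w \<le> U\<^sup>2"
    using U by (auto intro!: mult_mono simp: power2_eq_square hs_norm2_nonneg intro: order_trans[OF hs_norm2_nonneg])
  then have "hs_summable s (B2Q N t x y) \<and> hs_norm2 s (B2Q N t x y) \<le> 4 * E * U\<^sup>2"
    "hs_summable s (B2Q N t w w) \<and> hs_norm2 s (B2Q N t w w) \<le> 4 * E * U\<^sup>2"
    using hs_norm2_B2Q[OF s N x y, of t] hs_norm2_B2Q[OF s N w w, of t] E0 unfolding E_def
    by (meson mult_left_mono order_trans zero_le_mult_iff zero_le_numeral)+
  moreover have "hs_summable s (\<lambda>k. B2Q N t x y k - B2Q N t w w k) \<and>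
      hs_norm2 s (\<lambda>k. B2Q N t x y k - B2Q N t w w k)
      \<le> 2 * (hs_norm2 s (B2Q N t x y) + hs_norm2 s (B2Q N t w w))"
    using calculation by (intro hs_summable_triangle norm_triangle_ineq4) auto
  ultimately show ?thesis
    unfolding E_def[symmetric] by auto
qed

lemma hs_norm2_B2Q_sub_diag_diff:
  assumes s: "s \<ge> 0" and N: "0 < N"
    and x: "hs_summable s x" and y: "hs_summable s y" and w: "hs_summable s w"
    and x': "hs_summable s x'" and y': "hs_summable s y'" and w': "hs_summable s w'"
    and D: "hs_norm2 s (\<lambda>k. x k - x' k) \<le> D" "hs_norm2 s (\<lambda>k. y k - y' k) \<le> D"
      "hs_norm2 s (\<lambda>k. w k - w' k) \<le> D"
    and V: "hs_norm2 s y \<le> V" "hs_norm2 s w \<le> V" "hs_norm2 s x' \<le> V'" "hs_norm2 s w' \<le> V'"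
  shows "hs_summable s (\<lambda>k. (B2Q N t x y k - B2Q N t w w k) - (B2Q N t x' y' k - B2Q N t w' w' k)) \<and>
    hs_norm2 s (\<lambda>k. (B2Q N t x y k - B2Q N t w w k) - (B2Q N t x' y' k - B2Q N t w' w' k))
      \<le> 32 * (B2_const s / (real N)\<^sup>2) * (D * (V + V'))"
proof -
  define E where "E = B2_const s / (real N)\<^sup>2"
  have "hs_summable s (\<lambda>k. B2Q N t x y k - B2Q N t x' y' k) \<and>
      hs_norm2 s (\<lambda>k. B2Q N t x y k - B2Q N t x' y' k) \<le> 8 * E * (D * (V + V'))"
    "hs_summable s (\<lambda>k. B2Q N t w w k - B2Q N t w' w' k) \<and>
      hs_norm2 s (\<lambda>k. B2Q N t w w k - B2Q N t w' w' k) \<le> 8 * E * (D * (V + V'))"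
    unfolding E_def
    by (rule hs_norm2_B2Q_diff[OF s N x y x' y' D(1,2) V(1,3)],
        rule hs_norm2_B2Q_diff[OF s N w w w' w' D(3,3) V(2,4)])
  moreover have "hs_summable s (\<lambda>k. (B2Q N t x y k - B2Q N t w w k) - (B2Q N t x' y' k - B2Q N t w' w' k)) \<and>
      hs_norm2 s (\<lambda>k. (B2Q N t x y k - B2Q N t w w k) - (B2Q N t x' y' k - B2Q N t w' w' k))
      \<le> 2 * (hs_norm2 s (\<lambda>k. B2Q N t x y k - B2Q N t x' y' k) + hs_norm2 s (\<lambda>k. B2Q N t w w k - B2Q N t w' w' k))"
  proof (intro hs_summable_triangle)
    show "cmod ((a - b) - (a' - b')) \<le> cmod (a - a') + cmod (b - b')" for a b a' b' :: complex
      using norm_triangle_ineq4[of "a - a'" "b - b'"] by (simp add: algebra_simps)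
  qed (use calculation in auto)
  ultimately show ?thesis
    unfolding E_def[symmetric] by auto
qed

lemma pair_norm_le: "hs_norm2 s f + hs_norm2 s g \<le> X\<^sup>2 \<Longrightarrow> 0 \<le> X \<Longrightarrow> pair_norm s f g \<le> X"
  unfolding pair_norm_def by (rule real_le_lsqrt)

lemma in_Hs_BQ:
  assumes "s \<ge> 0" "0 < N" "in_Hs s u" "in_Hs s v"
  shows "in_Hs s (fst (BQ N t u v))" and "in_Hs s (snd (BQ N t u v))"
proof -
  have u: "real_mean_zero u" "hs_summable s u" and v: "real_mean_zero v" "hs_summable s v"
    using assms(3,4) by (simp_all add: in_Hs_iff)
  have "hs_summable s (B2Q N t x y)" if "hs_summable s x" "hs_summable s y" for x y
    using hs_norm2_B2Q[OF assms(1,2) that] by blast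
  then show "in_Hs s (fst (BQ N t u v))" "in_Hs s (snd (BQ N t u v))"
    using u v unfolding in_Hs_iff BQ_eq_B2Q
    by (auto intro: real_mean_zero_diff real_mean_zero_B2Q hs_summable_diff)
qed

lemma BQ_rate:
  shows "8 * sqrt (B2_const s) * (1 / real N) \<ge> 0" and "B2_const s / (real N)\<^sup>2 \<ge> 0"
    and "(8 * sqrt (B2_const s) * (1 / real N))\<^sup>2 = 64 * (B2_const s / (real N)\<^sup>2)"
  unfolding B2_const_def using inverse_square_sum_nonneg
  by (simp_all add: power_mult_distrib power_divide)

lemma pair_norm_BQ_le:
  assumes s: "s \<ge> 0" and N: "0 < N" and u: "hs_summable s u" and v: "hs_summable s v"
  shows "pair_norm s (fst (BQ N t u v)) (snd (BQ N t u v))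
    \<le> 8 * sqrt (B2_const s) * (1 / real N) * (pair_norm s u v)\<^sup>2"
proof -
  define E where "E = B2_const s / (real N)\<^sup>2"
  define K where "K = 8 * sqrt (B2_const s) * (1 / real N)"
  have K: "K \<ge> 0" "E \<ge> 0" "K\<^sup>2 = 64 * E"
    unfolding K_def E_def by (rule BQ_rate)+
  define U where "U = hs_norm2 s u + hs_norm2 s v"
  have U: "hs_norm2 s u \<le> U" "hs_norm2 s v \<le> U" "(pair_norm s u v)\<^sup>2 = U" "U \<ge> 0"
    unfolding U_def pair_norm_def by (simp_all add: hs_norm2_nonneg)
  have "hs_norm2 s (fst (BQ N t u v)) + hs_norm2 s (snd (BQ N t u v)) \<le> 32 * (E * U\<^sup>2)"
    using hs_norm2_B2Q_sub_diag[OF s N u v u U(1,2,1), of t] hs_norm2_B2Q_sub_diag[OF s N u v v U(1,2,2), of t]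
    unfolding BQ_eq_B2Q E_def[symmetric] by (simp add: mult.assoc)
  also have "\<dots> \<le> (K * U)\<^sup>2"
    using K by (simp add: power_mult_distrib)
  finally show ?thesis
    unfolding K_def[symmetric] U(3) using K U by (intro pair_norm_le) auto
qed

lemma pair_norm_BQ_diff_le:
  assumes s: "s \<ge> 0" and N: "0 < N"
    and u: "hs_summable s u" and v: "hs_summable s v" and u': "hs_summable s u'" and v': "hs_summable s v'"
  shows "pair_norm s (\<lambda>k. fst (BQ N t u v) k - fst (BQ N t u' v') k)
      (\<lambda>k. snd (BQ N t u v) k - snd (BQ N t u' v') k)
    \<le> 8 * sqrt (B2_const s) * (1 / real N) * pair_norm s (\<lambda>k. u k - u' k) (\<lambda>k. v k - v' k)
      * (pair_norm s u v + pair_norm s u' v')"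
proof -
  define E where "E = B2_const s / (real N)\<^sup>2"
  define K where "K = 8 * sqrt (B2_const s) * (1 / real N)"
  have K: "K \<ge> 0" "E \<ge> 0" "K\<^sup>2 = 64 * E"
    unfolding K_def E_def by (rule BQ_rate)+
  define U where "U = hs_norm2 s u + hs_norm2 s v"
  define U' where "U' = hs_norm2 s u' + hs_norm2 s v'"
  define D where "D = hs_norm2 s (\<lambda>k. u k - u' k) + hs_norm2 s (\<lambda>k. v k - v' k)"
  have U: "hs_norm2 s u \<le> U" "hs_norm2 s v \<le> U" "hs_norm2 s u' \<le> U'" "hs_norm2 s v' \<le> U'"
    and D: "hs_norm2 s (\<lambda>k. u k - u' k) \<le> D" "hs_norm2 s (\<lambda>k. v k - v' k) \<le> D"
    and norms: "pair_norm s u v = sqrt U" "pair_norm s u' v' = sqrt U'"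
      "pair_norm s (\<lambda>k. u k - u' k) (\<lambda>k. v k - v' k) = sqrt D"
    and nonneg: "U \<ge> 0" "U' \<ge> 0" "D \<ge> 0"
    unfolding U_def U'_def D_def pair_norm_def by (simp_all add: hs_norm2_nonneg add_nonneg_nonneg)
  have "hs_norm2 s (\<lambda>k. fst (BQ N t u v) k - fst (BQ N t u' v') k)
      + hs_norm2 s (\<lambda>k. snd (BQ N t u v) k - snd (BQ N t u' v') k) \<le> 64 * (E * (D * (U + U')))"
    using hs_norm2_B2Q_sub_diag_diff[OF s N u v u u' v' u' D(1,2,1) U(2,1,3,3), of t]
      hs_norm2_B2Q_sub_diag_diff[OF s N u v v u' v' v' D(1,2,2) U(2,2,3,4), of t]
    unfolding BQ_eq_B2Q E_def[symmetric] by (simp add: mult.assoc)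
  also have "\<dots> \<le> 64 * (E * (D * (sqrt U + sqrt U')\<^sup>2))"
    using nonneg K by (intro mult_left_mono) (auto simp: power2_sum)
  also have "\<dots> = (K * sqrt D * (sqrt U + sqrt U'))\<^sup>2"
    using nonneg K by (simp add: power_mult_distrib)
  finally show ?thesis
    unfolding K_def[symmetric] norms using nonneg K by (intro pair_norm_le) auto
qed

theorem lemma6p2:
  fixes s :: real
  assumes "s \<ge> 0"
  shows "\<exists>C. \<forall>(N::nat) (t::real) u v u' v'.
      N \<ge> 1 \<longrightarrow> in_Hs s u \<longrightarrow> in_Hs s v \<longrightarrow> in_Hs s u' \<longrightarrow> in_Hs s v' \<longrightarrow>
      in_Hs s (fst (BQ N t u v)) \<and> in_Hs s (snd (BQ N t u v)) \<and>
      pair_norm s (fst (BQ N t u v)) (snd (BQ N t u v))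
        \<le> C * (1 / real N) * (pair_norm s u v)\<^sup>2 \<and>
      pair_norm s (\<lambda>k. fst (BQ N t u v) k - fst (BQ N t u' v') k)
                  (\<lambda>k. snd (BQ N t u v) k - snd (BQ N t u' v') k)
        \<le> C * (1 / real N) * pair_norm s (\<lambda>k. u k - u' k) (\<lambda>k. v k - v' k)
            * (pair_norm s u v + pair_norm s u' v')"
proof (intro exI[of _ "8 * sqrt (B2_const s)"] allI impI conjI)
  fix N :: nat and t :: real and u v u' v'
  assume "N \<ge> 1" and Hs: "in_Hs s u" "in_Hs s v" "in_Hs s u'" "in_Hs s v'"
  then have N: "0 < N" and summable: "hs_summable s u" "hs_summable s v" "hs_summable s u'" "hs_summable s v'"
    by (simp_all add: in_Hs_iff)
  show "in_Hs s (fst (BQ N t u v))" "in_Hs s (snd (BQ N t u v))"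
    using in_Hs_BQ[OF assms N Hs(1,2)] by blast+
  show "pair_norm s (fst (BQ N t u v)) (snd (BQ N t u v))
      \<le> 8 * sqrt (B2_const s) * (1 / real N) * (pair_norm s u v)\<^sup>2"
    using assms N summable(1,2) by (rule pair_norm_BQ_le)
  show "pair_norm s (\<lambda>k. fst (BQ N t u v) k - fst (BQ N t u' v') k)
      (\<lambda>k. snd (BQ N t u v) k - snd (BQ N t u' v') k)
    \<le> 8 * sqrt (B2_const s) * (1 / real N) * pair_norm s (\<lambda>k. u k - u' k) (\<lambda>k. v k - v' k)
      * (pair_norm s u v + pair_norm s u' v')"
    using assms N summable by (rule pair_norm_BQ_diff_le)
qed

end
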